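(* Let $D_i,a_i,\lambda_i>0$ and $n_i\in[1,2]$ for $i\in\{1,2\}$. Then there exists $C>0$ such that whenever $\chi_1>0$, $\chi_2>0$ and (IE) holds, for all $\varepsilon\in(0,1)$ the functions $$\mathcal{F}_\varepsilon(t):=\int_\Omega u_\varepsilon\ln u_\varepsilon-\int_\Omega u_\varepsilon+\frac{\varepsilon}{(3-n_1)(4-n_1)}\int_\Omega\frac{1}{u_\varepsilon^{3-n_1}}+\frac{\chi_1}{\chi_2}\int_\Omega v_\varepsilon\ln v_\varepsilon-\frac{\chi_1}{\chi_2}\int_\Omega v_\varepsilon+\frac{\chi_1\varepsilon}{(3-n_2)(4-n_2)\chi_2}\int_\Omega\frac{1}{v_\varepsilon^{3-n_2}},\quad t\ge0,$$ $$\mathcal{D}_\varepsilon(t):=\frac{D_1}{2}\int_\Omega\frac{u_{\varepsilon x}^2}{u_\varepsilon}+\varepsilon\int_\Omega u_\varepsilon^{n_1-1}u_{\varepsilon xx}^2+D_1\varepsilon\int_\Omega\frac{u_{\varepsilon x}^2}{u_\varepsilon^{5-n_1}}+\frac{\chi_1D_2}{2\chi_2}\int_\Omega\frac{v_{\varepsilon x}^2}{v_\varepsilon}+\frac{\chi_1\varepsilon}{\chi_2}\int_\Omega v_\varepsilon^{n_2-1}v_{\varepsilon xx}^2+\frac{\chi_1D_2\varepsilon}{\chi_2}\int_\Omega\frac{v_{\varepsilon x}^2}{v_\varepsilon^{5-n_2}},\quad t>0,$$ (all integrands evaluated at $(\cdot,t)$) satisfy $$\frac{d}{dt}\mathcal{F}_\varepsilon(t)+\mathcal{D}_\varepsilon(t)\le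 C\Big(1+\frac{\chi_1}{\chi_2}\Big)\Big\{1+\Big(\int_\Omega u_\varepsilon(\cdot,t)\Big)^7+\Big(\int_\Omega v_\varepsilon(\cdot,t)\Big)^7\Big\}\qquad\text{for all }t>0.$$
   Context: Let $\Omega\subset\mathbb{R}$ be a bounded open interval and fix $\alpha\in(0,\frac12]$. Assumption (IE): $u_0,v_0\in W^{1,2}(\Omega)$ with $u_0>0,v_0>0$ in $\overline\Omega$; for each $\varepsilon\in(0,1)$, $u_{0\varepsilon},v_{0\varepsilon}\in C^5(\overline\Omega)$ with $u_{0\varepsilon x}=u_{0\varepsilon xxx}=v_{0\varepsilon x}=v_{0\varepsilon xxx}=0$ on $\partial\Omega$; $\frac12\inf_\Omega u_0\le u_{0\varepsilon}\le u_0+1$, $\frac12\inf_\Omega v_0\le v_{0\varepsilon}\le v_0+1$ in $\Omega$; $\int_\Omega u_{0\varepsilon x}^2\le\int_\Omega u_{0x}^2+1$, $\int_\Omega v_{0\varepsilon x}^2\le\int_\Omega v_{0x}^2+1$; $u_{0\varepsilon}\to u_0$, $v_{0\varepsilon}\to v_0$ a.e. as $\varepsilon\searrow0$. $(u_\varepsilon,v_\varepsilon)$ is the global classical solution, positive in $\overline\Omega\times[0,\infty)$ and in $C^{4,1}(\overline\Omega\times(0,\infty))\cap\bigcap_{s\in(3/2,2)}C^0([0,\infty);W^{s,2}(\Omega))$, of the approximating problem $u_t=-\varepsilon\big(\frac{u^4}{u^{4-n_1}+\varepsilon}u_{xxx}\big)_x+\varepsilon^{\alpha/2}(u^{-\alpha}u_x)_x+D_1u_{xx}-\chi_1\big(\frac{u^{5-n_1}}{u^{4-n_1}+\varepsilon}v_x\big)_x+\frac{3u^3}{3u^2+\varepsilon}(\lambda_1-u+a_1v)$,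 $v_t=-\varepsilon\big(\frac{v^4}{v^{4-n_2}+\varepsilon}v_{xxx}\big)_x+\varepsilon^{\alpha/2}(v^{-\alpha}v_x)_x+D_2v_{xx}+\chi_2\big(\frac{v^{5-n_2}}{v^{4-n_2}+\varepsilon}u_x\big)_x+\frac{3v^3}{3v^2+\varepsilon}(\lambda_2-v-a_2u)$ in $\Omega\times(0,\infty)$, $u_x=v_x=u_{xxx}=v_{xxx}=0$ on $\partial\Omega$, $u(\cdot,0)=u_{0\varepsilon}$, $v(\cdot,0)=v_{0\varepsilon}$ (this solution exists globally for $n_1,n_2\in[1,2]$). *)

theory Defs
  imports "HOL-Analysis.Analysis"
begin

text \<open>The domain is the open interval Omega = (p,q) with p < q; its closure is {p..q}.
  Spatial derivatives (one-sided at the endpoints) are taken within the closed interval.\<close>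

definition dx1 :: "real \<Rightarrow> real \<Rightarrow> (real \<Rightarrow> real) \<Rightarrow> real \<Rightarrow> real" where
  "dx1 p q f x = vector_derivative f (at x within {p..q})"

definition Ck_on :: "nat \<Rightarrow> real \<Rightarrow> real \<Rightarrow> (real \<Rightarrow> real) \<Rightarrow> bool" where
  "Ck_on k p q f \<longleftrightarrow>
     (\<forall>j<k. \<forall>x\<in>{p..q}. (((dx1 p q ^^ j) f) has_real_derivative ((dx1 p q ^^ Suc j) f x))
                            (at x within {p..q})) \<and>
     (\<forall>j\<le>k. continuous_on {p..q} ((dx1 p q ^^ j) f))"

definition pdx :: "real \<Rightarrow> real \<Rightarrow> (real \<Rightarrow> real \<Rightarrow> real) \<Rightarrow> real \<Rightarrow> real \<Rightarrow> real" where
  "pdx p q w x t = vector_derivative (\<lambda>y. w y t) (at x within {p..q})"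

definition pdt :: "(real \<Rightarrow> real \<Rightarrow> real) \<Rightarrow> real \<Rightarrow> real \<Rightarrow> real" where
  "pdt w x t = deriv (\<lambda>s. w x s) t"

definition C41_on :: "real \<Rightarrow> real \<Rightarrow> (real \<Rightarrow> real \<Rightarrow> real) \<Rightarrow> bool" where
  "C41_on p q w \<longleftrightarrow>
     (\<forall>k<4. \<forall>x\<in>{p..q}. \<forall>t>0.
        ((\<lambda>y. (pdx p q ^^ k) w y t) has_real_derivative ((pdx p q ^^ Suc k) w x t))
          (at x within {p..q})) \<and>
     (\<forall>k\<le>4. continuous_on ({p..q} \<times> {0<..}) (\<lambda>(x,t). (pdx p q ^^ k) w x t)) \<and>
     (\<forall>x\<in>{p..q}. \<forall>t>0. ((\<lambda>s. w x s) has_real_derivative pdt w x t) (at t)) \<and>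
     continuous_on ({p..q} \<times> {0<..}) (\<lambda>(x,t). pdt w x t)"

text \<open>Membership in W^{1,2}(Omega) (continuous representative), with weak derivative g.\<close>
definition W12_deriv :: "real \<Rightarrow> real \<Rightarrow> (real \<Rightarrow> real) \<Rightarrow> (real \<Rightarrow> real) \<Rightarrow> bool" where
  "W12_deriv p q f g \<longleftrightarrow>
     g integrable_on {p..q} \<and> (\<lambda>x. (g x)\<^sup>2) integrable_on {p..q} \<and>
     (\<forall>x\<in>{p..q}. f x = f p + integral {p..x} g)"

text \<open>Assumption (IE) for one component (u or v); the family is indexed by epsilon.\<close>
definition IE_comp :: "real \<Rightarrow> real \<Rightarrow> (real \<Rightarrow> real) \<Rightarrow> (real \<Rightarrow> real \<Rightarrow> real) \<Rightarrow> bool" where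
  "IE_comp p q w0 w0e \<longleftrightarrow>
     (\<exists>g. W12_deriv p q w0 g \<and>
        (\<forall>x\<in>{p..q}. w0 x > 0) \<and>
        (\<forall>\<epsilon>\<in>{0<..<1}.
           Ck_on 5 p q (w0e \<epsilon>) \<and>
           dx1 p q (w0e \<epsilon>) p = 0 \<and> dx1 p q (w0e \<epsilon>) q = 0 \<and>
           (dx1 p q ^^ 3) (w0e \<epsilon>) p = 0 \<and> (dx1 p q ^^ 3) (w0e \<epsilon>) q = 0 \<and>
           (\<forall>x\<in>{p<..<q}. Inf (w0 ` {p<..<q}) / 2 \<le> w0e \<epsilon> x \<and> w0e \<epsilon> x \<le> w0 x + 1) \<and>
           integral {p..q} (\<lambda>x. (dx1 p q (w0e \<epsilon>) x)\<^sup>2)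
             \<le> integral {p..q} (\<lambda>x. (g x)\<^sup>2) + 1) \<and>
        (AE x in lborel. x \<in> {p<..<q} \<longrightarrow>
            ((\<lambda>\<epsilon>. w0e \<epsilon> x) \<longlongrightarrow> w0 x) (at_right 0)))"

definition approx_sol ::
  "real \<Rightarrow> real \<Rightarrow> real \<Rightarrow> real \<Rightarrow> real \<Rightarrow> real \<Rightarrow> real \<Rightarrow> real \<Rightarrow> real \<Rightarrow> real \<Rightarrow> real
   \<Rightarrow> real \<Rightarrow> real \<Rightarrow> real \<Rightarrow> (real \<Rightarrow> real) \<Rightarrow> (real \<Rightarrow> real)
   \<Rightarrow> (real \<Rightarrow> real \<Rightarrow> real) \<Rightarrow> (real \<Rightarrow> real \<Rightarrow> real) \<Rightarrow> bool" where
  "approx_sol p q \<alpha> D1 D2 \<chi>1 \<chi>2 lam1 lam2 a1 a2 n1 n2 \<epsilon> u0 v0 u v \<longleftrightarrow>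
     continuous_on ({p..q} \<times> {0..}) (\<lambda>(x,t). u x t) \<and>
     continuous_on ({p..q} \<times> {0..}) (\<lambda>(x,t). v x t) \<and>
     (\<forall>x\<in>{p..q}. \<forall>t\<ge>0. u x t > 0 \<and> v x t > 0) \<and>
     C41_on p q u \<and> C41_on p q v \<and>
     (\<forall>x\<in>{p<..<q}. \<forall>t>0.
        ((\<lambda>y. - \<epsilon> * (u y t ^ 4 / (u y t powr (4 - n1) + \<epsilon>)) * (pdx p q ^^ 3) u y t
              + \<epsilon> powr (\<alpha>/2) * u y t powr (-\<alpha>) * pdx p q u y t
              + D1 * pdx p q u y t
              - \<chi>1 * (u y t powr (5 - n1) / (u y t powr (4 - n1) + \<epsilon>)) * pdx p q v y t)
          has_real_derivative
           (pdt u x t - 3 * u x t ^ 3 / (3 * u x t ^ 2 + \<epsilon>) * (lam1 - u x t + a1 * v x t)))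
          (at x)) \<and>
     (\<forall>x\<in>{p<..<q}. \<forall>t>0.
        ((\<lambda>y. - \<epsilon> * (v y t ^ 4 / (v y t powr (4 - n2) + \<epsilon>)) * (pdx p q ^^ 3) v y t
              + \<epsilon> powr (\<alpha>/2) * v y t powr (-\<alpha>) * pdx p q v y t
              + D2 * pdx p q v y t
              + \<chi>2 * (v y t powr (5 - n2) / (v y t powr (4 - n2) + \<epsilon>)) * pdx p q u y t)
          has_real_derivative
           (pdt v x t - 3 * v x t ^ 3 / (3 * v x t ^ 2 + \<epsilon>) * (lam2 - v x t - a2 * u x t)))
          (at x)) \<and>
     (\<forall>t>0. \<forall>x\<in>{p,q}. pdx p q u x t = 0 \<and> pdx p q v x t = 0 \<and>
                         (pdx p q ^^ 3) u x t = 0 \<and> (pdx p q ^^ 3) v x t = 0) \<and>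
     (\<forall>x\<in>{p..q}. u x 0 = u0 x \<and> v x 0 = v0 x)"

definition energyF ::
  "real \<Rightarrow> real \<Rightarrow> real \<Rightarrow> real \<Rightarrow> real \<Rightarrow> real \<Rightarrow> real
   \<Rightarrow> (real \<Rightarrow> real \<Rightarrow> real) \<Rightarrow> (real \<Rightarrow> real \<Rightarrow> real) \<Rightarrow> real \<Rightarrow> real" where
  "energyF p q \<chi>1 \<chi>2 n1 n2 \<epsilon> u v t =
      integral {p..q} (\<lambda>x. u x t * ln (u x t)) - integral {p..q} (\<lambda>x. u x t)
    + \<epsilon> / ((3 - n1) * (4 - n1)) * integral {p..q} (\<lambda>x. 1 / u x t powr (3 - n1))
    + \<chi>1 / \<chi>2 * integral {p..q} (\<lambda>x. v x t * ln (v x t))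
    - \<chi>1 / \<chi>2 * integral {p..q} (\<lambda>x. v x t)
    + \<chi>1 * \<epsilon> / ((3 - n2) * (4 - n2) * \<chi>2) * integral {p..q} (\<lambda>x. 1 / v x t powr (3 - n2))"

definition dissD ::
  "real \<Rightarrow> real \<Rightarrow> real \<Rightarrow> real \<Rightarrow> real \<Rightarrow> real \<Rightarrow> real \<Rightarrow> real \<Rightarrow> real
   \<Rightarrow> (real \<Rightarrow> real \<Rightarrow> real) \<Rightarrow> (real \<Rightarrow> real \<Rightarrow> real) \<Rightarrow> real \<Rightarrow> real" where
  "dissD p q D1 D2 \<chi>1 \<chi>2 n1 n2 \<epsilon> u v t =
      D1 / 2 * integral {p..q} (\<lambda>x. (pdx p q u x t)\<^sup>2 / u x t)
    + \<epsilon> * integral {p..q} (\<lambda>x. u x t powr (n1 - 1) * ((pdx p q ^^ 2) u x t)\<^sup>2)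
    + D1 * \<epsilon> * integral {p..q} (\<lambda>x. (pdx p q u x t)\<^sup>2 / u x t powr (5 - n1))
    + \<chi>1 * D2 / (2 * \<chi>2) * integral {p..q} (\<lambda>x. (pdx p q v x t)\<^sup>2 / v x t)
    + \<chi>1 * \<epsilon> / \<chi>2 * integral {p..q} (\<lambda>x. v x t powr (n2 - 1) * ((pdx p q ^^ 2) v x t)\<^sup>2)
    + \<chi>1 * D2 * \<epsilon> / \<chi>2 * integral {p..q} (\<lambda>x. (pdx p q v x t)\<^sup>2 / v x t powr (5 - n2))"

end

theory Submission
  imports Defs
begin

text \<open>Test the u-equation with \<phi>(u) = ln u - \<epsilon>/(4 - n1) u^(n1 - 4), the derivative of the
  energy density, and the v-equation with (\<chi>1/\<chi>2) \<phi>(v): the chemotaxis cross terms cancel.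
  Since \<phi>'(w) = 1/w + \<epsilon> w^(n - 5) turns the fourth-order mobility into w^(n - 1) and the
  chemotaxis sensitivity into 1, two integrations by parts produce the dissipation
  \<epsilon> \<integral> w^(n - 1) w_xx^2 up to the term \<epsilon> (n - 1)(n - 2)/3 \<integral> w^(n - 3) w_x^4, which has the good
  sign for n in [1,2]. The reaction terms are bounded pointwise by C (1 + |c| + |c| u^(3/2)); in one
  dimension sup u \<le> \<integral>u/|\<Omega>| + \<integral>|u_x| and (\<integral>|u_x|)^2 \<le> \<integral>u \<integral>u_x^2/u, so Young's
  inequality absorbs them into half of the Fisher information at the cost of a polynomial of
  degree 7 in the masses.\<close>

lemma two_mult_le_weighted_squares:
  fixes e x y :: real
  assumes "e > 0"
  shows "2 * x * y \<le> e * x\<^sup>2 + y\<^sup>2 / e"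
proof -
  have "0 \<le> (e * x - y)\<^sup>2 / e" using assms by simp
  also have "\<dots> = e * x\<^sup>2 + y\<^sup>2 / e - 2 * x * y"
    using assms by (simp add: power2_eq_square field_simps)
  finally show ?thesis by simp
qed

lemma monomial_le_one_add_powers:
  fixes U V :: real
  assumes "0 \<le> U" "0 \<le> V" "i + j \<le> m"
  shows "U ^ i * V ^ j \<le> 1 + U ^ m + V ^ m"
proof -
  define M where "M = max U V"
  have "U ^ i * V ^ j \<le> M ^ i * M ^ j"
    using assms by (intro mult_mono power_mono) (auto simp: M_def)
  also have "\<dots> = M ^ (i + j)" by (simp add: power_add)
  also have "\<dots> \<le> max 1 (M ^ m)"
  proof (cases "M \<le> 1")
    case True then show ?thesis using assms by (simp add: M_def power_le_one)
  next
    case False then show ?thesis using assms by (simp add: power_increasing le_max_iff_disj)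
  qed
  also have "\<dots> \<le> 1 + U ^ m + V ^ m"
    using assms by (auto simp: M_def max_def)
  finally show ?thesis .
qed

lemma square_le_mult_if_amgm_bound:
  fixes S U I :: real
  assumes "U > 0" "I \<ge> 0" "S \<ge> 0"
    and amgm: "\<And>k. k > 0 \<Longrightarrow> S \<le> (k * I + U / k) / 2"
  shows "S\<^sup>2 \<le> U * I"
proof (cases "I > 0")
  case True
  define k where "k = sqrt (U / I)"
  have "k > 0" "k * I = sqrt (U * I)" "U / k = sqrt (U * I)"
    using assms True by (simp_all add: k_def real_sqrt_divide real_sqrt_mult field_simps)
  then have "S \<le> sqrt (U * I)" using amgm[of k] by simp
  then show ?thesis using assms by (metis power_mono real_sqrt_pow2 zero_le_mult_iff less_imp_le)
next
  case False
  then have "I = 0" using assms by simp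
  have "S \<le> S / 2" if "S > 0" using amgm[of "U / S"] assms that \<open>I = 0\<close> by simp
  then have "S = 0" using assms by force
  then show ?thesis using \<open>I = 0\<close> by simp
qed

lemma ln_le_two_sqrt:
  fixes y :: real
  assumes "0 < y"
  shows "ln y \<le> 2 * sqrt y"
proof -
  have "ln y = 2 * ln (sqrt y)" using assms by (simp add: ln_sqrt)
  also have "\<dots> \<le> 2 * sqrt y" using ln_less_self[of "sqrt y"] assms by (simp add: less_imp_le)
  finally show ?thesis .
qed

lemma neg_ln_mult_le_one:
  fixes y :: real
  assumes "0 < y"
  shows "- ln y * y \<le> 1"
proof -
  have "- ln y = ln (1 / y)" using assms by (simp add: ln_div)
  also have "\<dots> \<le> 1 / y - 1" using assms by (intro ln_le_minus_one) simp
  finally have "- ln y * y \<le> (1 / y - 1) * y" using assms by (intro mult_right_mono) auto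
  also have "\<dots> \<le> 1" using assms by (simp add: field_simps)
  finally show ?thesis .
qed

lemma ln_mult_logistic_le_cube:
  fixes y g lam :: real
  assumes "1 \<le> y" "0 < g" "g \<le> y" "0 < lam"
  shows "ln y * g * (lam - y) \<le> lam ^ 3"
proof (cases "y \<le> lam")
  case True
  have "0 \<le> ln y" "ln y \<le> lam" using assms True ln_less_self[of y] by (auto simp del: ln_less_self)
  then have "ln y * g * (lam - y) \<le> lam * lam * lam"
    using assms True by (intro mult_mono) auto
  then show ?thesis by (simp add: power3_eq_cube)
next
  case False
  then have "ln y * g * (lam - y) \<le> 0" using assms by (intro mult_nonneg_nonpos) auto
  moreover have "0 \<le> lam ^ 3" using assms by simp
  ultimately show ?thesis by linarith
qed

lemma mult_add_le_add_mult_one_add: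
  fixes a b k W :: real
  assumes "0 \<le> a" "0 \<le> b" "0 \<le> k" "0 \<le> W"
  shows "a * W + k * (b * W) \<le> (a + b) * (1 + k) * W"
proof -
  have "0 \<le> (b + k * a) * W" using assms by simp
  then show ?thesis by (simp add: algebra_simps)
qed

lemma powr_add_power: "0 < w \<Longrightarrow> w powr (a + real k) = w powr a * w ^ k"
  by (simp add: powr_add powr_realpow)

section \<open>The regularised entropy\<close>

definition entropy :: "real \<Rightarrow> real \<Rightarrow> real \<Rightarrow> real" where
  "entropy n \<epsilon> w = w * ln w - w + \<epsilon> / ((3 - n) * (4 - n)) * (1 / w powr (3 - n))"

definition entropy_deriv :: "real \<Rightarrow> real \<Rightarrow> real \<Rightarrow> real" where
  "entropy_deriv n \<epsilon> w = ln w - \<epsilon> / (4 - n) * w powr (n - 4)"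

definition entropy_deriv2 :: "real \<Rightarrow> real \<Rightarrow> real \<Rightarrow> real" where
  "entropy_deriv2 n \<epsilon> w = 1 / w + \<epsilon> * w powr (n - 5)"

definition logistic_factor :: "real \<Rightarrow> real \<Rightarrow> real" where
  "logistic_factor \<epsilon> w = 3 * w ^ 3 / (3 * w\<^sup>2 + \<epsilon>)"

lemma entropy_has_real_derivative:
  assumes "0 < w" "n < 3"
  shows "(entropy n \<epsilon> has_real_derivative entropy_deriv n \<epsilon> w) (at w)"
proof -
  define c where "c = \<epsilon> / ((3 - n) * (4 - n))"
  have "((\<lambda>w. w * ln w - w + c * w powr (n - 3)) has_real_derivative
          (ln w + 1) - 1 + c * ((n - 3) * w powr (n - 3 - 1))) (at w)"
    using assms by (auto intro!: derivative_eq_intros)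
  moreover have "c * (n - 3) = - (\<epsilon> / (4 - n))"
    using assms by (simp add: c_def divide_simps) (simp add: algebra_simps)
  then have "(ln w + 1) - 1 + c * ((n - 3) * w powr (n - 3 - 1)) = entropy_deriv n \<epsilon> w"
    unfolding entropy_deriv_def by (simp add: mult.assoc[symmetric])
  ultimately have "((\<lambda>w. w * ln w - w + c * w powr (n - 3)) has_real_derivative
          entropy_deriv n \<epsilon> w) (at w)"
    by simp
  then show ?thesis
    by (rule has_field_derivative_transform_within_open[where S = "{0<..}"])
       (use assms in \<open>auto simp: entropy_def c_def powr_minus_divide[symmetric]\<close>)
qed

lemma entropy_deriv_has_real_derivative:
  assumes "0 < w" "n \<noteq> 4"
  shows "(entropy_deriv n \<epsilon> has_real_derivative entropy_deriv2 n \<epsilon> w) (at w)"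
proof -
  have "(entropy_deriv n \<epsilon> has_real_derivative 1 / w - \<epsilon> / (4 - n) * ((n - 4) * w powr (n - 4 - 1))) (at w)"
    unfolding entropy_deriv_def[abs_def] using assms by (auto intro!: derivative_eq_intros)
  moreover have "\<epsilon> / (4 - n) * ((n - 4) * w powr (n - 4 - 1)) = - \<epsilon> * w powr (n - 5)"
    using assms by (simp add: field_simps)
  ultimately show ?thesis by (simp add: entropy_deriv2_def)
qed

lemma entropy_deriv2_pos: "0 < w \<Longrightarrow> 0 \<le> \<epsilon> \<Longrightarrow> 0 < entropy_deriv2 n \<epsilon> w"
  by (simp add: entropy_deriv2_def add_pos_nonneg)

lemma entropy_deriv2_factor:
  assumes "0 < w" "0 \<le> \<epsilon>"
  shows "entropy_deriv2 n \<epsilon> w = w powr (n - 5) * (w powr (4 - n) + \<epsilon>)"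
proof -
  have "w powr (n - 5) * w powr (4 - n) = 1 / w"
    using assms by (simp add: powr_add[symmetric] powr_minus_divide)
  then show ?thesis by (simp add: entropy_deriv2_def algebra_simps)
qed

lemma entropy_deriv2_mult_mobility:
  assumes "0 < w" "0 \<le> \<epsilon>"
  shows "entropy_deriv2 n \<epsilon> w * (w ^ 4 / (w powr (4 - n) + \<epsilon>)) = w powr (n - 1)"
proof -
  have "0 < w powr (4 - n) + \<epsilon>" using assms by (simp add: add_pos_nonneg)
  moreover have "w powr (n - 5) * w ^ 4 = w powr (n - 1)"
    using powr_add_power[OF assms(1), of "n - 5" 4] by simp
  ultimately show ?thesis using assms by (simp add: entropy_deriv2_factor)
qed

lemma entropy_deriv2_mult_sensitivity:
  assumes "0 < w" "0 \<le> \<epsilon>"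
  shows "entropy_deriv2 n \<epsilon> w * (w powr (5 - n) / (w powr (4 - n) + \<epsilon>)) = 1"
proof -
  have "0 < w powr (4 - n) + \<epsilon>" using assms by (simp add: add_pos_nonneg)
  moreover have "w powr (n - 5) * w powr (5 - n) = 1"
    using assms by (simp add: powr_add[symmetric])
  ultimately show ?thesis using assms by (simp add: entropy_deriv2_factor)
qed

lemma logistic_factor_pos: "0 < w \<Longrightarrow> 0 < \<epsilon> \<Longrightarrow> 0 < logistic_factor \<epsilon> w"
  by (simp add: logistic_factor_def add_pos_pos)

lemma logistic_factor_le:
  assumes "0 < w" "0 < \<epsilon>"
  shows "logistic_factor \<epsilon> w \<le> w"
proof -
  have "3 * w ^ 3 \<le> w * (3 * w\<^sup>2 + \<epsilon>)"
    using assms by (simp add: power2_eq_square power3_eq_cube algebra_simps)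
  then show ?thesis using assms by (simp add: logistic_factor_def pos_divide_le_eq add_pos_pos)
qed

lemma regularisation_weight_bounds:
  fixes w \<epsilon> n :: real
  assumes "0 < w" "0 < \<epsilon>" "\<epsilon> < 1" "1 \<le> n" "n \<le> 2"
  shows "0 \<le> 3 * \<epsilon> * w powr (n - 1) / (3 * w\<^sup>2 + \<epsilon>)"
    and "3 * \<epsilon> * w powr (n - 1) / (3 * w\<^sup>2 + \<epsilon>) \<le> 3"
    and "3 * \<epsilon> * w powr (n - 1) / (3 * w\<^sup>2 + \<epsilon>) * w \<le> 3"
proof -
  have den: "0 < 3 * w\<^sup>2 + \<epsilon>" using assms by (simp add: add_pos_pos)
  then show "0 \<le> 3 * \<epsilon> * w powr (n - 1) / (3 * w\<^sup>2 + \<epsilon>)" using assms by simp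
  have "\<epsilon> * w powr (n - 1) \<le> 3 * w\<^sup>2 + \<epsilon> \<and> \<epsilon> * w powr (n - 1) * w \<le> 3 * w\<^sup>2 + \<epsilon>"
  proof (cases "w \<le> 1")
    case True
    have "w powr (n - 1) \<le> 1" using assms True by (intro powr_le1) auto
    then have "\<epsilon> * w powr (n - 1) \<le> \<epsilon>" using assms by (simp add: mult_le_cancel_left1)
    moreover have "\<epsilon> * w powr (n - 1) * w \<le> \<epsilon> * w powr (n - 1)"
      using assms True by (simp add: mult_left_le)
    moreover have "0 \<le> 3 * w\<^sup>2" by simp
    ultimately show ?thesis by linarith
  next
    case False
    have "w powr (n - 1) \<le> w" using assms False powr_mono[of "n - 1" 1 w] by simp
    then have "\<epsilon> * w powr (n - 1) \<le> 1 * w"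
      using assms by (intro mult_mono) auto
    moreover have "\<epsilon> * w powr (n - 1) * w \<le> w * w"
      using \<open>\<epsilon> * w powr (n - 1) \<le> 1 * w\<close> assms by (intro mult_right_mono) auto
    moreover have "w \<le> w * w" using False by simp
    ultimately show ?thesis using assms unfolding power2_eq_square by linarith
  qed
  then show "3 * \<epsilon> * w powr (n - 1) / (3 * w\<^sup>2 + \<epsilon>) \<le> 3"
    and "3 * \<epsilon> * w powr (n - 1) / (3 * w\<^sup>2 + \<epsilon>) * w \<le> 3"
    using den by (simp_all add: field_simps)
qed

lemma ln_mult_logistic_le:
  fixes w g lam c :: real
  assumes "0 < w" "0 < g" "g \<le> w" "0 < lam"
  shows "ln w * g * (lam - w + c) \<le> 1 + lam ^ 3 + \<bar>c\<bar> + 2 * \<bar>c\<bar> * (w * sqrt w)"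
proof (cases "1 \<le> w")
  case True
  have "ln w * g * c \<le> ln w * g * \<bar>c\<bar>"
    using True assms by (intro mult_left_mono) auto
  also have "\<dots> \<le> (2 * sqrt w) * w * \<bar>c\<bar>"
    using ln_le_two_sqrt[OF assms(1)] True assms by (intro mult_right_mono mult_mono) auto
  finally have "ln w * g * c \<le> 2 * \<bar>c\<bar> * (w * sqrt w)" by (simp add: algebra_simps)
  moreover have "ln w * g * (lam - w) \<le> lam ^ 3"
    using ln_mult_logistic_le_cube[OF True assms(2-4)] .
  ultimately show ?thesis by (simp add: algebra_simps)
next
  case False
  have "ln w < 0" using assms False by simp
  then have "0 \<le> - ln w * g" using assms by (simp add: mult_nonpos_nonneg)
  have "ln w * g * (lam - w + c) = (- ln w * g) * (w - lam - c)" by (simp add: algebra_simps)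
  also have "\<dots> \<le> (- ln w * g) * (1 + \<bar>c\<bar>)"
    using \<open>0 \<le> - ln w * g\<close> False assms by (intro mult_left_mono) auto
  also have "\<dots> \<le> (- ln w * w) * (1 + \<bar>c\<bar>)"
    using assms \<open>ln w < 0\<close> by (intro mult_right_mono mult_left_mono) auto
  also have "\<dots> \<le> 1 * (1 + \<bar>c\<bar>)"
    using neg_ln_mult_le_one[OF assms(1)] by (intro mult_right_mono) auto
  finally have "ln w * g * (lam - w + c) \<le> 1 + \<bar>c\<bar>" by simp
  moreover have "0 \<le> lam ^ 3" "0 \<le> 2 * \<bar>c\<bar> * (w * sqrt w)" using assms by simp_all
  ultimately show ?thesis by linarith
qed

lemma reaction_term_le:
  fixes w \<epsilon> n lam c :: real
  assumes "0 < w" "0 < \<epsilon>" "\<epsilon> < 1" "1 \<le> n" "n \<le> 2" "0 < lam"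
  shows "entropy_deriv n \<epsilon> w * (logistic_factor \<epsilon> w * (lam - w + c))
     \<le> 4 + lam ^ 3 + 4 * \<bar>c\<bar> + 2 * \<bar>c\<bar> * (w * sqrt w)"
proof -
  define g where "g = logistic_factor \<epsilon> w"
  define Y where "Y = \<epsilon> * w powr (n - 4) * g"
  have g: "0 < g" "g \<le> w" using assms logistic_factor_pos logistic_factor_le by (auto simp: g_def)
  have "w powr (n - 1) = w powr (n - 4) * w ^ 3"
    using powr_add_power[OF assms(1), of "n - 4" 3] by simp
  then have "Y = 3 * \<epsilon> * w powr (n - 1) / (3 * w\<^sup>2 + \<epsilon>)"
    by (simp add: Y_def g_def logistic_factor_def)
  then have Y: "0 \<le> Y" "Y \<le> 3" "Y * w \<le> 3"
    using regularisation_weight_bounds[OF assms(1-5)] by simp_all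
  have split: "entropy_deriv n \<epsilon> w * (g * (lam - w + c))
      = ln w * g * (lam - w + c) + Y * (w - lam - c) / (4 - n)"
    using assms by (simp add: entropy_deriv_def Y_def field_simps)
  have "Y * (- c) \<le> Y * \<bar>c\<bar>" using Y by (intro mult_left_mono) auto
  moreover have "0 \<le> Y * lam" using Y assms by simp
  moreover have "Y * (w - lam - c) = Y * w - Y * lam + Y * (- c)" by (simp add: algebra_simps)
  moreover have "Y * \<bar>c\<bar> \<le> 3 * \<bar>c\<bar>" using Y by (intro mult_right_mono) auto
  ultimately have "Y * (w - lam - c) \<le> 3 + 3 * \<bar>c\<bar>" using Y by linarith
  moreover have "3 + 3 * \<bar>c\<bar> \<le> (3 + 3 * \<bar>c\<bar>) * (4 - n)"
    using assms by (simp add: mult_le_cancel_left1 add_pos_nonneg)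
  ultimately have "Y * (w - lam - c) / (4 - n) \<le> 3 + 3 * \<bar>c\<bar>"
    using assms by (simp add: divide_le_eq)
  then show ?thesis using split ln_mult_logistic_le[OF assms(1) g assms(6), of c] by (simp add: g_def)
qed

section \<open>The entropy inequality for one equation\<close>

definition flux :: "real \<Rightarrow> real \<Rightarrow> real \<Rightarrow> real \<Rightarrow> real \<Rightarrow> real \<Rightarrow> real \<Rightarrow> real \<Rightarrow> real \<Rightarrow> real" where
  "flux \<epsilon> \<alpha> n D chi w wx wxxx zx =
     - \<epsilon> * (w ^ 4 / (w powr (4 - n) + \<epsilon>)) * wxxx + \<epsilon> powr (\<alpha>/2) * w powr (-\<alpha>) * wx + D * wx
     - chi * (w powr (5 - n) / (w powr (4 - n) + \<epsilon>)) * zx"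

text \<open>The second summand is the primitive left by integrating \<epsilon> w^(n - 1) w_x w_xxx by parts
  twice; it converts that term into \<epsilon> w^(n - 1) w_xx^2 - \<epsilon> (n - 1)(n - 2)/3 w^(n - 3) w_x^4.\<close>
definition entropy_flux ::
  "real \<Rightarrow> real \<Rightarrow> real \<Rightarrow> real \<Rightarrow> real \<Rightarrow> real \<Rightarrow> real \<Rightarrow> real \<Rightarrow> real \<Rightarrow> real \<Rightarrow> real" where
  "entropy_flux \<epsilon> \<alpha> n D chi w wx wxx wxxx zx =
     entropy_deriv n \<epsilon> w * flux \<epsilon> \<alpha> n D chi w wx wxxx zx
     + \<epsilon> * (w powr (n - 1) * wx * wxx - (n - 1) / 3 * w powr (n - 2) * wx ^ 3)"

definition entropy_production ::
  "real \<Rightarrow> real \<Rightarrow> real \<Rightarrow> real \<Rightarrow> real \<Rightarrow> real \<Rightarrow> real \<Rightarrow> real \<Rightarrow> real \<Rightarrow> real \<Rightarrow> real" where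
  "entropy_production \<epsilon> \<alpha> n D chi w wx wxx zx F =
     entropy_deriv n \<epsilon> w * F
     + \<epsilon> powr (\<alpha>/2) * w powr (-\<alpha>) * entropy_deriv2 n \<epsilon> w * wx\<^sup>2
     + D * (wx\<^sup>2 / w) + (D * \<epsilon>) * (wx\<^sup>2 / w powr (5 - n)) - chi * (wx * zx)
     + \<epsilon> * (w powr (n - 1) * wxx\<^sup>2)
     - \<epsilon> * ((n - 1) * (n - 2) / 3 * w powr (n - 3) * wx ^ 4)"

lemma thin_film_correction_has_derivative:
  fixes W Wx Wxx :: "real \<Rightarrow> real"
  assumes "0 < W x"
    and "(W has_real_derivative Wx x) (at x)" "(Wx has_real_derivative Wxx x) (at x)"
    and "(Wxx has_real_derivative Wxxx) (at x)"
  shows "((\<lambda>y. W y powr (n - 1) * Wx y * Wxx y - (n - 1) / 3 * W y powr (n - 2) * Wx y ^ 3)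
     has_real_derivative W x powr (n - 1) * (Wxx x)\<^sup>2 + W x powr (n - 1) * Wx x * Wxxx
       - (n - 1) * (n - 2) / 3 * W x powr (n - 3) * (Wx x) ^ 4) (at x)"
  using assms
  by (auto intro!: derivative_eq_intros simp: power2_eq_square power3_eq_cube power4_eq_xxxx field_simps)

lemma entropy_flux_has_derivative:
  fixes W Wx Wxx Wxxx Zx :: "real \<Rightarrow> real"
  assumes "0 < W x" "0 < \<epsilon>" "n \<le> 2"
    and "(W has_real_derivative Wx x) (at x)" "(Wx has_real_derivative Wxx x) (at x)"
    and "(Wxx has_real_derivative Wxxx x) (at x)"
    and "((\<lambda>y. flux \<epsilon> \<alpha> n D chi (W y) (Wx y) (Wxxx y) (Zx y)) has_real_derivative F) (at x)"
  shows "((\<lambda>y. entropy_flux \<epsilon> \<alpha> n D chi (W y) (Wx y) (Wxx y) (Wxxx y) (Zx y)) has_real_derivative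
     entropy_production \<epsilon> \<alpha> n D chi (W x) (Wx x) (Wxx x) (Zx x) F) (at x)"
proof -
  define w where "w = W x"
  have w: "0 < w" using assms by (simp add: w_def)
  have "entropy_deriv2 n \<epsilon> w * Wx x * flux \<epsilon> \<alpha> n D chi w (Wx x) (Wxxx x) (Zx x)
      = - \<epsilon> * (entropy_deriv2 n \<epsilon> w * (w ^ 4 / (w powr (4 - n) + \<epsilon>))) * Wx x * Wxxx x
        + \<epsilon> powr (\<alpha>/2) * w powr (-\<alpha>) * entropy_deriv2 n \<epsilon> w * (Wx x)\<^sup>2
        + D * entropy_deriv2 n \<epsilon> w * (Wx x)\<^sup>2
        - chi * (entropy_deriv2 n \<epsilon> w * (w powr (5 - n) / (w powr (4 - n) + \<epsilon>))) * (Wx x * Zx x)"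
    by (simp add: flux_def power2_eq_square algebra_simps)
  also have "\<dots> = - \<epsilon> * w powr (n - 1) * Wx x * Wxxx x
        + \<epsilon> powr (\<alpha>/2) * w powr (-\<alpha>) * entropy_deriv2 n \<epsilon> w * (Wx x)\<^sup>2
        + (D * (Wx x)\<^sup>2 / w + D * \<epsilon> * (Wx x)\<^sup>2 / w powr (5 - n))
        - chi * (Wx x * Zx x)"
  proof -
    have "D * entropy_deriv2 n \<epsilon> w * (Wx x)\<^sup>2 = D * (Wx x)\<^sup>2 / w + D * \<epsilon> * (Wx x)\<^sup>2 / w powr (5 - n)"
      using w powr_minus_divide[of w "5 - n"] by (simp add: entropy_deriv2_def algebra_simps)
    then show ?thesis
      unfolding entropy_deriv2_mult_mobility[OF w less_imp_le[OF assms(2)]]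
        entropy_deriv2_mult_sensitivity[OF w less_imp_le[OF assms(2)]]
      by (simp add: algebra_simps)
  qed
  finally have expand: "entropy_deriv2 n \<epsilon> w * Wx x * flux \<epsilon> \<alpha> n D chi w (Wx x) (Wxxx x) (Zx x)
      = - \<epsilon> * w powr (n - 1) * Wx x * Wxxx x
        + \<epsilon> powr (\<alpha>/2) * w powr (-\<alpha>) * entropy_deriv2 n \<epsilon> w * (Wx x)\<^sup>2
        + (D * (Wx x)\<^sup>2 / w + D * \<epsilon> * (Wx x)\<^sup>2 / w powr (5 - n))
        - chi * (Wx x * Zx x)" .
  have dphi: "((\<lambda>y. entropy_deriv n \<epsilon> (W y)) has_real_derivative entropy_deriv2 n \<epsilon> w * Wx x) (at x)"
    using DERIV_chain2[OF entropy_deriv_has_real_derivative assms(4), of n \<epsilon>] w assms(3)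
    by (simp add: w_def)
  show ?thesis
    unfolding entropy_flux_def
    by (rule DERIV_cong[OF DERIV_add[OF DERIV_mult[OF dphi assms(7)]
          DERIV_cmult[OF thin_film_correction_has_derivative[OF assms(1,4-6)]]]])
      (use expand in \<open>simp add: entropy_production_def w_def algebra_simps\<close>)
qed

lemma entropy_production_ge:
  assumes "0 < w" "0 < \<epsilon>" "1 \<le> n" "n \<le> 2"
  shows "entropy_deriv n \<epsilon> w * F + D * (wx\<^sup>2 / w) + (D * \<epsilon>) * (wx\<^sup>2 / w powr (5 - n))
           - chi * (wx * zx) + \<epsilon> * (w powr (n - 1) * wxx\<^sup>2)
         \<le> entropy_production \<epsilon> \<alpha> n D chi w wx wxx zx F"
proof -
  have "0 \<le> \<epsilon> powr (\<alpha>/2) * w powr (-\<alpha>) * entropy_deriv2 n \<epsilon> w * wx\<^sup>2"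
    using assms entropy_deriv2_pos[of w \<epsilon> n] by simp
  moreover have "(n - 1) * (n - 2) \<le> 0" using assms by (simp add: mult_nonneg_nonpos)
  then have "\<epsilon> * ((n - 1) * (n - 2) / 3 * w powr (n - 3) * wx ^ 4) \<le> 0"
    using assms by (simp add: mult_nonpos_nonneg mult_nonneg_nonpos)
  ultimately show ?thesis by (simp add: entropy_production_def)
qed

lemma entropy_production_has_integral_zero:
  fixes W Wx Wxx Wxxx Zx F :: "real \<Rightarrow> real"
  assumes "p < q" "0 < \<epsilon>" "n \<le> 2"
    and pos: "\<forall>x\<in>{p..q}. 0 < W x"
    and dW: "\<forall>x\<in>{p..q}. (W has_real_derivative Wx x) (at x within {p..q})"
    and dWx: "\<forall>x\<in>{p..q}. (Wx has_real_derivative Wxx x) (at x within {p..q})"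
    and dWxx: "\<forall>x\<in>{p..q}. (Wxx has_real_derivative Wxxx x) (at x within {p..q})"
    and cont: "continuous_on {p..q} Wxxx" "continuous_on {p..q} Zx"
    and eq: "\<forall>x\<in>{p<..<q}. ((\<lambda>y. flux \<epsilon> \<alpha> n D chi (W y) (Wx y) (Wxxx y) (Zx y))
                            has_real_derivative F x) (at x)"
    and bc: "Wx p = 0" "Wx q = 0" "Wxxx p = 0" "Wxxx q = 0" "Zx p = 0" "Zx q = 0"
  shows "((\<lambda>x. entropy_production \<epsilon> \<alpha> n D chi (W x) (Wx x) (Wxx x) (Zx x) (F x)) has_integral 0) {p..q}"
proof -
  have cW: "continuous_on {p..q} W" "continuous_on {p..q} Wx" "continuous_on {p..q} Wxx"
    using dW dWx dWxx by (auto intro: DERIV_continuous_on)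
  have nz: "\<forall>x\<in>{p..q}. W x \<noteq> 0" "\<forall>x\<in>{p..q}. W x powr (4 - n) + \<epsilon> \<noteq> 0"
    using pos \<open>0 < \<epsilon>\<close> by (metis less_irrefl, metis add_pos_pos less_irrefl powr_gt_zero)
  have "((\<lambda>x. entropy_production \<epsilon> \<alpha> n D chi (W x) (Wx x) (Wxx x) (Zx x) (F x)) has_integral
         entropy_flux \<epsilon> \<alpha> n D chi (W q) (Wx q) (Wxx q) (Wxxx q) (Zx q)
         - entropy_flux \<epsilon> \<alpha> n D chi (W p) (Wx p) (Wxx p) (Wxxx p) (Zx p)) {p..q}"
  proof (rule fundamental_theorem_of_calculus_interior)
    show "continuous_on {p..q} (\<lambda>x. entropy_flux \<epsilon> \<alpha> n D chi (W x) (Wx x) (Wxx x) (Wxxx x) (Zx x))"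
      unfolding entropy_flux_def flux_def entropy_deriv_def
      by (intro continuous_intros cW cont nz)
    fix x assume x: "x \<in> {p<..<q}"
    then have at: "at x within {p..q} = at x" and xc: "x \<in> {p..q}"
      by (auto intro: at_within_interior)
    have "(W has_real_derivative Wx x) (at x)" "(Wx has_real_derivative Wxx x) (at x)"
      "(Wxx has_real_derivative Wxxx x) (at x)"
      using dW[rule_format, OF xc] dWx[rule_format, OF xc] dWxx[rule_format, OF xc] by (simp_all add: at)
    from entropy_flux_has_derivative[OF _ \<open>0 < \<epsilon>\<close> \<open>n \<le> 2\<close> this eq[rule_format, OF x]]
    show "((\<lambda>x. entropy_flux \<epsilon> \<alpha> n D chi (W x) (Wx x) (Wxx x) (Wxxx x) (Zx x)) has_vector_derivative
        entropy_production \<epsilon> \<alpha> n D chi (W x) (Wx x) (Wxx x) (Zx x) (F x)) (at x)"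
      using pos xc by (simp add: has_real_derivative_iff_has_vector_derivative)
  qed (use \<open>p < q\<close> in simp)
  then show ?thesis by (simp add: entropy_flux_def flux_def bc)
qed

lemma entropy_inequality:
  fixes W Wx Wxx Wxxx Wt R Zx :: "real \<Rightarrow> real"
  assumes "p < q" "0 < \<epsilon>" "1 \<le> n" "n \<le> 2"
    and pos: "\<forall>x\<in>{p..q}. 0 < W x"
    and dW: "\<forall>x\<in>{p..q}. (W has_real_derivative Wx x) (at x within {p..q})"
    and dWx: "\<forall>x\<in>{p..q}. (Wx has_real_derivative Wxx x) (at x within {p..q})"
    and dWxx: "\<forall>x\<in>{p..q}. (Wxx has_real_derivative Wxxx x) (at x within {p..q})"
    and cont: "continuous_on {p..q} Wxxx" "continuous_on {p..q} Zx"
      "continuous_on {p..q} Wt" "continuous_on {p..q} R"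
    and eq: "\<forall>x\<in>{p<..<q}. ((\<lambda>y. flux \<epsilon> \<alpha> n D chi (W y) (Wx y) (Wxxx y) (Zx y))
                            has_real_derivative Wt x - R x) (at x)"
    and bc: "Wx p = 0" "Wx q = 0" "Wxxx p = 0" "Wxxx q = 0" "Zx p = 0" "Zx q = 0"
  shows "integral {p..q} (\<lambda>x. entropy_deriv n \<epsilon> (W x) * Wt x)
         + \<epsilon> * integral {p..q} (\<lambda>x. W x powr (n - 1) * (Wxx x)\<^sup>2)
         + D * integral {p..q} (\<lambda>x. (Wx x)\<^sup>2 / W x)
         + D * \<epsilon> * integral {p..q} (\<lambda>x. (Wx x)\<^sup>2 / W x powr (5 - n))
       \<le> integral {p..q} (\<lambda>x. entropy_deriv n \<epsilon> (W x) * R x)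
         + chi * integral {p..q} (\<lambda>x. Wx x * Zx x)"
proof -
  have cW: "continuous_on {p..q} W" "continuous_on {p..q} Wx" "continuous_on {p..q} Wxx"
    using dW dWx dWxx by (auto intro: DERIV_continuous_on)
  have nz: "\<forall>x\<in>{p..q}. W x \<noteq> 0" using pos by force
  define P where "P x = entropy_deriv n \<epsilon> (W x) * Wt x - entropy_deriv n \<epsilon> (W x) * R x
    + D * ((Wx x)\<^sup>2 / W x) + (D * \<epsilon>) * ((Wx x)\<^sup>2 / W x powr (5 - n)) - chi * (Wx x * Zx x)
    + \<epsilon> * (W x powr (n - 1) * (Wxx x)\<^sup>2)" for x
  define Q where "Q x = entropy_production \<epsilon> \<alpha> n D chi (W x) (Wx x) (Wxx x) (Zx x) (Wt x - R x)" for x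
  have PQ: "P x \<le> Q x" if "x \<in> {p..q}" for x
    using entropy_production_ge[of "W x" \<epsilon> n "Wt x - R x" D "Wx x" chi "Zx x" "Wxx x" \<alpha>] pos that assms
    by (simp add: P_def Q_def algebra_simps)
  have Q: "(Q has_integral 0) {p..q}"
    unfolding Q_def by (rule entropy_production_has_integral_zero[OF assms(1,2,4) pos dW dWx dWxx cont(1,2) eq bc])
  have int: "(\<lambda>x. entropy_deriv n \<epsilon> (W x) * Wt x) integrable_on {p..q}"
    "(\<lambda>x. entropy_deriv n \<epsilon> (W x) * R x) integrable_on {p..q}"
    "(\<lambda>x. (Wx x)\<^sup>2 / W x) integrable_on {p..q}"
    "(\<lambda>x. (Wx x)\<^sup>2 / W x powr (5 - n)) integrable_on {p..q}"
    "(\<lambda>x. Wx x * Zx x) integrable_on {p..q}"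
    "(\<lambda>x. W x powr (n - 1) * (Wxx x)\<^sup>2) integrable_on {p..q}"
    unfolding entropy_deriv_def
    using nz \<open>n \<le> 2\<close> by (auto intro!: integrable_continuous_interval continuous_intros cW cont)
  then have "P integrable_on {p..q}"
    unfolding P_def by (intro integrable_add integrable_diff integrable_on_mult_right)
  then have "integral {p..q} P \<le> integral {p..q} Q"
    using Q PQ by (intro integral_le) auto
  also have "\<dots> = 0" using Q by (simp add: integral_unique)
  finally have "integral {p..q} P \<le> 0" .
  moreover have "integral {p..q} P = integral {p..q} (\<lambda>x. entropy_deriv n \<epsilon> (W x) * Wt x)
      - integral {p..q} (\<lambda>x. entropy_deriv n \<epsilon> (W x) * R x)
      + D * integral {p..q} (\<lambda>x. (Wx x)\<^sup>2 / W x)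
      + (D * \<epsilon>) * integral {p..q} (\<lambda>x. (Wx x)\<^sup>2 / W x powr (5 - n))
      - chi * integral {p..q} (\<lambda>x. Wx x * Zx x)
      + \<epsilon> * integral {p..q} (\<lambda>x. W x powr (n - 1) * (Wxx x)\<^sup>2)"
    using int unfolding P_def
    by (simp add: integral_add integral_diff integrable_add integrable_diff integrable_on_mult_right
        del: times_divide_eq_right)
  ultimately show ?thesis by linarith
qed

section \<open>One-dimensional interpolation and the reaction terms\<close>

lemma integral_pos:
  fixes W :: "real \<Rightarrow> real"
  assumes "p < q" "continuous_on {p..q} W" "\<forall>x\<in>{p..q}. 0 < W x"
  shows "0 < integral {p..q} W"
proof -
  obtain x0 where x0: "x0 \<in> {p..q}" and min: "\<forall>y\<in>{p..q}. W x0 \<le> W y"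
    using continuous_attains_inf[OF compact_Icc _ assms(2)] assms(1) by auto
  have "0 < W x0 * (q - p)" using assms x0 by simp
  also have "\<dots> = integral {p..q} (\<lambda>_. W x0)" using assms by simp
  also have "\<dots> \<le> integral {p..q} W"
    using min assms by (intro integral_le integrable_continuous_interval) auto
  finally show ?thesis .
qed

lemma abs_diff_le_integral_abs_deriv:
  fixes W W' :: "real \<Rightarrow> real"
  assumes "p \<le> a" "a \<le> b" "b \<le> q"
    and dW: "\<forall>x\<in>{p..q}. (W has_real_derivative W' x) (at x within {p..q})"
    and cW': "continuous_on {p..q} W'"
  shows "\<bar>W b - W a\<bar> \<le> integral {p..q} (\<lambda>x. \<bar>W' x\<bar>)"
proof -
  have sub: "{a..b} \<subseteq> {p..q}" using assms by auto
  have cW'ab: "continuous_on {a..b} W'" using continuous_on_subset[OF cW' sub] .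
  have "(W' has_integral (W b - W a)) {a..b}"
    using dW sub \<open>a \<le> b\<close>
    by (intro fundamental_theorem_of_calculus)
       (auto simp: has_real_derivative_iff_has_vector_derivative
             intro: has_vector_derivative_within_subset[OF _ sub])
  then have "\<bar>W b - W a\<bar> = \<bar>integral {a..b} W'\<bar>" by (simp add: integral_unique)
  also have "\<dots> \<le> integral {a..b} (\<lambda>x. \<bar>W' x\<bar>)"
    using Henstock_Kurzweil_Integration.integral_norm_bound_integral[of W' "{a..b}" "\<lambda>x. \<bar>W' x\<bar>"]
      cW'ab
    by (simp add: integrable_continuous_interval continuous_intros)
  also have "\<dots> \<le> integral {p..q} (\<lambda>x. \<bar>W' x\<bar>)"
    using sub cW' cW'ab by (intro integral_subset_le integrable_continuous_interval continuous_intros) auto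
  finally show ?thesis .
qed

lemma le_mean_add_integral_abs_deriv:
  fixes W W' :: "real \<Rightarrow> real"
  assumes "p < q" "x \<in> {p..q}"
    and dW: "\<forall>x\<in>{p..q}. (W has_real_derivative W' x) (at x within {p..q})"
    and cW': "continuous_on {p..q} W'"
  shows "W x \<le> integral {p..q} W / (q - p) + integral {p..q} (\<lambda>x. \<bar>W' x\<bar>)"
proof -
  have cW: "continuous_on {p..q} W" using dW by (auto intro: DERIV_continuous_on)
  obtain x0 where x0: "x0 \<in> {p..q}" and min: "\<forall>y\<in>{p..q}. W x0 \<le> W y"
    using continuous_attains_inf[OF compact_Icc _ cW] assms(1) by auto
  have "W x0 * (q - p) = integral {p..q} (\<lambda>_. W x0)" using assms by simp
  also have "\<dots> \<le> integral {p..q} W"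
    using min cW by (intro integral_le integrable_continuous_interval) auto
  finally have "W x0 \<le> integral {p..q} W / (q - p)" using assms by (simp add: field_simps)
  moreover have "\<bar>W x - W x0\<bar> \<le> integral {p..q} (\<lambda>x. \<bar>W' x\<bar>)"
    using abs_diff_le_integral_abs_deriv[OF _ _ _ dW cW', of x0 x]
      abs_diff_le_integral_abs_deriv[OF _ _ _ dW cW', of x x0] x0 assms(2)
    by (cases "x0 \<le> x") (auto simp: abs_minus_commute)
  ultimately show ?thesis by linarith
qed

lemma integral_abs_deriv_squared_le:
  fixes W W' :: "real \<Rightarrow> real"
  assumes "p < q" "\<forall>x\<in>{p..q}. 0 < W x" "continuous_on {p..q} W" "continuous_on {p..q} W'"
  shows "(integral {p..q} (\<lambda>x. \<bar>W' x\<bar>))\<^sup>2 \<le> integral {p..q} W * integral {p..q} (\<lambda>x. (W' x)\<^sup>2 / W x)"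
proof (rule square_le_mult_if_amgm_bound)
  have nz: "\<forall>x\<in>{p..q}. W x \<noteq> 0" using assms(2) by force
  have int: "W integrable_on {p..q}" "(\<lambda>x. (W' x)\<^sup>2 / W x) integrable_on {p..q}"
    "(\<lambda>x. \<bar>W' x\<bar>) integrable_on {p..q}"
    using assms nz by (auto intro!: integrable_continuous_interval continuous_intros)
  show "0 < integral {p..q} W" using integral_pos assms by blast
  show "0 \<le> integral {p..q} (\<lambda>x. (W' x)\<^sup>2 / W x)"
    using int assms(2) by (intro integral_nonneg) (auto intro!: divide_nonneg_pos)
  show "0 \<le> integral {p..q} (\<lambda>x. \<bar>W' x\<bar>)" using int by (intro integral_nonneg) auto
  fix k :: real assume "0 < k"
  have "integral {p..q} (\<lambda>x. \<bar>W' x\<bar>)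
      \<le> integral {p..q} (\<lambda>x. k / 2 * ((W' x)\<^sup>2 / W x) + 1 / (2 * k) * W x)"
  proof (rule integral_le)
    fix x assume "x \<in> {p..q}"
    then have "0 < W x" using assms(2) by auto
    then have "0 \<le> (k * \<bar>W' x\<bar> - W x)\<^sup>2 / (2 * k * W x)" using \<open>0 < k\<close> by simp
    then show "\<bar>W' x\<bar> \<le> k / 2 * ((W' x)\<^sup>2 / W x) + 1 / (2 * k) * W x"
      using \<open>0 < W x\<close> \<open>0 < k\<close> by (simp add: power2_eq_square field_simps)
  qed (fact int(3), intro integrable_add integrable_on_mult_right int(1,2))
  also have "\<dots> = k / 2 * integral {p..q} (\<lambda>x. (W' x)\<^sup>2 / W x) + 1 / (2 * k) * integral {p..q} W"
    using integral_add[OF integrable_on_mult_right[OF int(2)] integrable_on_mult_right[OF int(1)],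
        of "k / 2" "1 / (2 * k)"]
    by (simp only: integral_mult_right)
  also have "\<dots> = (k * integral {p..q} (\<lambda>x. (W' x)\<^sup>2 / W x) + integral {p..q} W / k) / 2"
    by (simp add: field_simps)
  finally show "integral {p..q} (\<lambda>x. \<bar>W' x\<bar>)
      \<le> (k * integral {p..q} (\<lambda>x. (W' x)\<^sup>2 / W x) + integral {p..q} W / k) / 2" .
qed

text \<open>U, V are masses, I = \<integral> W'^2/W and S = \<integral> |W'|, so that B bounds sup W.\<close>
lemma young_three_halves_bound:
  fixes U V I S L a D :: real
  assumes "0 < U" "0 \<le> V" "0 \<le> I" "0 \<le> S" "S\<^sup>2 \<le> U * I" "0 < L" "0 < D"
  defines "B \<equiv> U / L + S"
  shows "a * V * (B * sqrt B)
     \<le> D / 2 * I + D / (4 * L\<^sup>2) * U + 2 * a\<^sup>2 / (L * D) * (U\<^sup>2 * V\<^sup>2) + 4 * a ^ 4 / D ^ 3 * (U ^ 3 * V ^ 4)"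
proof -
  define e where "e = D / (4 * U)"
  define m where "m = a\<^sup>2 * V\<^sup>2 * U / D"
  have "0 < e" "0 \<le> B" using assms by (simp_all add: e_def B_def)
  have "a * V * (B * sqrt B) = (2 * B * (a * V * sqrt B)) / 2" by simp
  also have "\<dots> \<le> (e * B\<^sup>2 + (a * V * sqrt B)\<^sup>2 / e) / 2"
    using two_mult_le_weighted_squares[OF \<open>0 < e\<close>] by (intro divide_right_mono) auto
  also have "\<dots> = e / 2 * B\<^sup>2 + 2 * m * (U / L) + 2 * m * S"
    using assms \<open>0 \<le> B\<close> by (simp add: e_def m_def B_def power_mult_distrib field_simps)
  finally have young: "a * V * (B * sqrt B) \<le> e / 2 * B\<^sup>2 + 2 * m * (U / L) + 2 * m * S" .
  have "2 * (U / L) * S \<le> (U / L)\<^sup>2 + S\<^sup>2" using two_mult_le_weighted_squares[of 1 "U / L" S] by simp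
  then have "B\<^sup>2 \<le> 2 * (U / L)\<^sup>2 + 2 * (U * I)" using assms by (simp add: B_def power2_sum)
  then have B2: "e / 2 * B\<^sup>2 \<le> e / 2 * (2 * (U / L)\<^sup>2 + 2 * (U * I))"
    using \<open>0 < e\<close> by (intro mult_left_mono) auto
  have "2 * m * S \<le> e * S\<^sup>2 + m\<^sup>2 / e"
    using two_mult_le_weighted_squares[OF \<open>0 < e\<close>, of S m] by (simp add: ac_simps)
  also have "\<dots> \<le> e * (U * I) + m\<^sup>2 / e" using assms \<open>0 < e\<close> by simp
  finally have mS: "2 * m * S \<le> e * (U * I) + m\<^sup>2 / e" .
  have "e / 2 * (2 * (U / L)\<^sup>2 + 2 * (U * I)) + 2 * m * (U / L) + (e * (U * I) + m\<^sup>2 / e)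
      = D / 2 * I + D / (4 * L\<^sup>2) * U + 2 * a\<^sup>2 / (L * D) * (U\<^sup>2 * V\<^sup>2) + 4 * a ^ 4 / D ^ 3 * (U ^ 3 * V ^ 4)"
    using assms by (simp add: e_def m_def power2_eq_square power3_eq_cube power4_eq_xxxx field_simps)
  then show ?thesis using young B2 mS by linarith
qed

definition reaction_constant :: "real \<Rightarrow> real \<Rightarrow> real \<Rightarrow> real \<Rightarrow> real" where
  "reaction_constant L lam s D =
     (4 + lam ^ 3) * L + 4 * \<bar>s\<bar> + D / (4 * L\<^sup>2) + 8 * s\<^sup>2 / (L * D) + 64 * s ^ 4 / D ^ 3"

lemma reaction_constant_pos: "0 < L \<Longrightarrow> 0 < lam \<Longrightarrow> 0 < D \<Longrightarrow> 0 < reaction_constant L lam s D"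
  unfolding reaction_constant_def by (intro add_pos_nonneg mult_pos_pos) auto

lemma reaction_integral_le_sup_bound:
  fixes W W' Z :: "real \<Rightarrow> real"
  assumes "p < q" "0 < \<epsilon>" "\<epsilon> < 1" "1 \<le> n" "n \<le> 2" "0 < lam"
    and pos: "\<forall>x\<in>{p..q}. 0 < W x" "\<forall>x\<in>{p..q}. 0 < Z x"
    and dW: "\<forall>x\<in>{p..q}. (W has_real_derivative W' x) (at x within {p..q})"
    and cont: "continuous_on {p..q} W'" "continuous_on {p..q} Z"
  defines "B \<equiv> integral {p..q} W / (q - p) + integral {p..q} (\<lambda>x. \<bar>W' x\<bar>)"
  shows "integral {p..q} (\<lambda>x. entropy_deriv n \<epsilon> (W x) * (logistic_factor \<epsilon> (W x) * (lam - W x + s * Z x)))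
    \<le> (4 + lam ^ 3) * (q - p) + (4 * \<bar>s\<bar> + 2 * \<bar>s\<bar> * (B * sqrt B)) * integral {p..q} Z"
proof -
  define K where "K = 4 * \<bar>s\<bar> + 2 * \<bar>s\<bar> * (B * sqrt B)"
  have cW: "continuous_on {p..q} W" using dW by (auto intro: DERIV_continuous_on)
  have nz: "\<forall>x\<in>{p..q}. W x \<noteq> 0" "\<forall>x\<in>{p..q}. 3 * (W x)\<^sup>2 + \<epsilon> \<noteq> 0"
    using pos(1) \<open>0 < \<epsilon>\<close>
    by (metis less_irrefl, metis add_pos_pos less_irrefl zero_less_power2 mult_pos_pos zero_less_numeral)
  have "integral {p..q} (\<lambda>x. entropy_deriv n \<epsilon> (W x) * (logistic_factor \<epsilon> (W x) * (lam - W x + s * Z x)))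
      \<le> integral {p..q} (\<lambda>x. (4 + lam ^ 3) + K * Z x)"
  proof (rule integral_le)
    fix x assume x: "x \<in> {p..q}"
    have "0 < W x" "0 < Z x" using pos x by auto
    have "W x \<le> B" using le_mean_add_integral_abs_deriv[OF \<open>p < q\<close> x dW cont(1)] by (simp add: B_def)
    then have "2 * \<bar>s * Z x\<bar> * (W x * sqrt (W x)) \<le> 2 * \<bar>s * Z x\<bar> * (B * sqrt B)"
      using \<open>0 < W x\<close> by (intro mult_left_mono mult_mono real_sqrt_le_mono) auto
    moreover have "K * Z x = 4 * \<bar>s * Z x\<bar> + 2 * \<bar>s * Z x\<bar> * (B * sqrt B)"
      using \<open>0 < Z x\<close> by (simp add: K_def abs_mult algebra_simps)
    ultimately show "entropy_deriv n \<epsilon> (W x) * (logistic_factor \<epsilon> (W x) * (lam - W x + s * Z x))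
        \<le> (4 + lam ^ 3) + K * Z x"
      using reaction_term_le[OF \<open>0 < W x\<close> assms(2-6), of "s * Z x"] by linarith
  qed (use nz \<open>n \<le> 2\<close> in \<open>auto intro!: integrable_continuous_interval continuous_intros cW cont
        simp: entropy_deriv_def logistic_factor_def\<close>)
  also have "\<dots> = (4 + lam ^ 3) * (q - p) + K * integral {p..q} Z"
    using integral_add[OF integrable_const_ivl[of "4 + lam ^ 3" p q]
        integrable_on_mult_right[OF integrable_continuous_interval[OF cont(2)], of K]] \<open>p < q\<close>
    by simp
  finally show ?thesis by (simp add: K_def)
qed

lemma reaction_integral_le:
  fixes W W' Z :: "real \<Rightarrow> real"
  assumes "p < q" "0 < \<epsilon>" "\<epsilon> < 1" "1 \<le> n" "n \<le> 2" "0 < lam" "0 < D"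
    and pos: "\<forall>x\<in>{p..q}. 0 < W x" "\<forall>x\<in>{p..q}. 0 < Z x"
    and dW: "\<forall>x\<in>{p..q}. (W has_real_derivative W' x) (at x within {p..q})"
    and cont: "continuous_on {p..q} W'" "continuous_on {p..q} Z"
  shows "integral {p..q} (\<lambda>x. entropy_deriv n \<epsilon> (W x) * (logistic_factor \<epsilon> (W x) * (lam - W x + s * Z x)))
      - D / 2 * integral {p..q} (\<lambda>x. (W' x)\<^sup>2 / W x)
    \<le> reaction_constant (q - p) lam s D * (1 + (integral {p..q} W) ^ 7 + (integral {p..q} Z) ^ 7)"
proof -
  define L U V I S where "L = q - p" and "U = integral {p..q} W" and "V = integral {p..q} Z"
    and "I = integral {p..q} (\<lambda>x. (W' x)\<^sup>2 / W x)" and "S = integral {p..q} (\<lambda>x. \<bar>W' x\<bar>)"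
  define B where "B = U / L + S"
  have cW: "continuous_on {p..q} W" using dW by (auto intro: DERIV_continuous_on)
  have "0 < L" "0 < U" "0 < V" using assms cW integral_pos by (auto simp: L_def U_def V_def)
  have "0 \<le> I" "0 \<le> S" unfolding I_def S_def using pos
    by (auto intro!: integral_nonneg integrable_continuous_interval continuous_intros cW cont divide_nonneg_pos)
  have "(2 * \<bar>s\<bar>) * V * (B * sqrt B) \<le> D / 2 * I + D / (4 * L\<^sup>2) * U
      + 8 * s\<^sup>2 / (L * D) * (U\<^sup>2 * V\<^sup>2) + 64 * s ^ 4 / D ^ 3 * (U ^ 3 * V ^ 4)"
    using young_three_halves_bound[of U V I S L D "2 * \<bar>s\<bar>"]
      integral_abs_deriv_squared_le[OF \<open>p < q\<close> pos(1) cW cont(1)]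
      \<open>0 < U\<close> \<open>0 < V\<close> \<open>0 \<le> I\<close> \<open>0 \<le> S\<close> \<open>0 < L\<close> \<open>0 < D\<close>
    by (simp add: B_def U_def I_def S_def power_mult_distrib)
  moreover have "1 \<le> 1 + U ^ 7 + V ^ 7" "V \<le> 1 + U ^ 7 + V ^ 7" "U \<le> 1 + U ^ 7 + V ^ 7"
    "U\<^sup>2 * V\<^sup>2 \<le> 1 + U ^ 7 + V ^ 7" "U ^ 3 * V ^ 4 \<le> 1 + U ^ 7 + V ^ 7"
    using monomial_le_one_add_powers[of U V 0 0 7] monomial_le_one_add_powers[of U V 0 1 7]
      monomial_le_one_add_powers[of U V 1 0 7] monomial_le_one_add_powers[of U V 2 2 7]
      monomial_le_one_add_powers[of U V 3 4 7] \<open>0 < U\<close> \<open>0 < V\<close> by simp_all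
  then have "(4 + lam ^ 3) * L * 1 + 4 * \<bar>s\<bar> * V + D / (4 * L\<^sup>2) * U
      + 8 * s\<^sup>2 / (L * D) * (U\<^sup>2 * V\<^sup>2) + 64 * s ^ 4 / D ^ 3 * (U ^ 3 * V ^ 4)
    \<le> reaction_constant L lam s D * (1 + U ^ 7 + V ^ 7)"
    unfolding reaction_constant_def distrib_right
    using assms \<open>0 < L\<close> by (intro add_mono mult_left_mono) auto
  ultimately show ?thesis
    using reaction_integral_le_sup_bound[OF assms(1-6) pos dW cont, of s]
    by (simp add: L_def U_def V_def I_def S_def B_def algebra_simps)
qed

section \<open>Time derivative of the energy\<close>

lemma continuous_on_slice:
  assumes "continuous_on (A \<times> B) (\<lambda>(x, t). f x t)" "s \<in> B"
  shows "continuous_on A (\<lambda>x. f x s)"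
proof -
  have "continuous_on A (\<lambda>x. (\<lambda>(x, t). f x t) (x, s))"
    by (rule continuous_on_compose2[OF assms(1)]) (use assms(2) in \<open>auto intro!: continuous_intros\<close>)
  then show ?thesis by simp
qed

lemma continuous_on_swap_args:
  assumes "continuous_on (A \<times> B) (\<lambda>(x, t). f x t)"
  shows "continuous_on (B \<times> A) (\<lambda>(t, x). f x t)"
proof -
  have "continuous_on (B \<times> A) (\<lambda>y. (\<lambda>(x, t). f x t) (snd y, fst y))"
    by (rule continuous_on_compose2[OF assms]) (auto intro!: continuous_intros)
  then show ?thesis by (simp add: split_beta)
qed

lemma has_real_derivative_integral_comp:
  fixes w wt :: "real \<Rightarrow> real \<Rightarrow> real" and G G' :: "real \<Rightarrow> real"
  assumes "0 < t"
    and cw: "continuous_on ({p..q} \<times> {0<..}) (\<lambda>(x, s). w x s)"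
    and pos: "\<forall>x\<in>{p..q}. \<forall>s>0. 0 < w x s"
    and dw: "\<forall>x\<in>{p..q}. \<forall>s>0. ((\<lambda>s. w x s) has_real_derivative wt x s) (at s)"
    and cwt: "continuous_on ({p..q} \<times> {0<..}) (\<lambda>(x, s). wt x s)"
    and dG: "\<forall>y>0. (G has_real_derivative G' y) (at y)"
    and cG': "continuous_on {0<..} G'"
  shows "((\<lambda>s. integral {p..q} (\<lambda>x. G (w x s))) has_real_derivative
           integral {p..q} (\<lambda>x. G' (w x t) * wt x t)) (at t)"
proof -
  have cG: "continuous_on {0<..} G"
    using dG by (intro continuous_at_imp_continuous_on) (auto intro: DERIV_isCont)
  have "continuous_on ({0<..} \<times> {p..q}) (\<lambda>y. G' ((\<lambda>(s, x). w x s) y))"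
    by (rule continuous_on_compose2[OF cG' continuous_on_swap_args[OF cw]]) (use pos in auto)
  then have cG'w: "continuous_on ({0<..} \<times> {p..q}) (\<lambda>(s, x). G' (w x s))"
    by (simp add: split_beta)
  have "((\<lambda>s. integral (cbox p q) (\<lambda>x. G (w x s))) has_field_derivative
           integral (cbox p q) (\<lambda>x. G' (w x t) * wt x t)) (at t within {0<..})"
  proof (rule leibniz_rule_field_derivative[where fx = "\<lambda>s x. G' (w x s) * wt x s"])
    fix s x :: real assume "s \<in> {0<..}" "x \<in> cbox p q"
    then have "((\<lambda>s. G (w x s)) has_real_derivative G' (w x s) * wt x s) (at s)"
      using dG pos dw by (intro DERIV_chain2[of G]) auto
    then show "((\<lambda>s. G (w x s)) has_field_derivative G' (w x s) * wt x s) (at s within {0<..})"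
      by (rule has_field_derivative_at_within)
  next
    fix s :: real assume "s \<in> {0<..}"
    have "continuous_on {p..q} (\<lambda>x. G (w x s))"
      by (rule continuous_on_compose2[OF cG continuous_on_slice[OF cw]]) (use pos \<open>s \<in> {0<..}\<close> in auto)
    then show "(\<lambda>x. G (w x s)) integrable_on cbox p q"
      by (simp add: integrable_continuous_interval)
  next
    show "continuous_on ({0<..} \<times> cbox p q) (\<lambda>(s, x). G' (w x s) * wt x s)"
      using continuous_on_mult[OF cG'w continuous_on_swap_args[OF cwt]] by (simp add: split_beta)
  qed (use \<open>0 < t\<close> in auto)
  moreover have "at t within {0<..} = at t" using \<open>0 < t\<close> by (intro at_within_open) auto
  ultimately show ?thesis by simp
qed

lemma C41_on_time_regularity:
  assumes "C41_on p q w"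
  shows "continuous_on ({p..q} \<times> {0<..}) (\<lambda>(x, t). w x t)"
    and "\<forall>x\<in>{p..q}. \<forall>t>0. ((\<lambda>s. w x s) has_real_derivative pdt w x t) (at t)"
    and "continuous_on ({p..q} \<times> {0<..}) (\<lambda>(x, t). pdt w x t)"
proof -
  have "continuous_on ({p..q} \<times> {0<..}) (\<lambda>(x, t). (pdx p q ^^ 0) w x t)"
    using assms unfolding C41_on_def by blast
  then show "continuous_on ({p..q} \<times> {0<..}) (\<lambda>(x, t). w x t)" by simp
qed (use assms in \<open>auto simp: C41_on_def\<close>)

lemma C41_on_space_regularity:
  assumes "C41_on p q w" "0 < t"
  shows "continuous_on {p..q} (\<lambda>x. w x t)"
    and "continuous_on {p..q} (\<lambda>x. pdx p q w x t)"
    and "continuous_on {p..q} (\<lambda>x. (pdx p q ^^ 3) w x t)"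
    and "continuous_on {p..q} (\<lambda>x. pdt w x t)"
    and "\<forall>x\<in>{p..q}. ((\<lambda>y. w y t) has_real_derivative pdx p q w x t) (at x within {p..q})"
    and "\<forall>x\<in>{p..q}. ((\<lambda>y. pdx p q w y t) has_real_derivative (pdx p q ^^ 2) w x t) (at x within {p..q})"
    and "\<forall>x\<in>{p..q}. ((\<lambda>y. (pdx p q ^^ 2) w y t) has_real_derivative (pdx p q ^^ 3) w x t)
           (at x within {p..q})"
proof -
  have D: "\<forall>x\<in>{p..q}. ((\<lambda>y. (pdx p q ^^ k) w y t) has_real_derivative (pdx p q ^^ Suc k) w x t)
      (at x within {p..q})" if "k < 4" for k
    using assms that unfolding C41_on_def by blast
  have C: "continuous_on {p..q} (\<lambda>x. (pdx p q ^^ k) w x t)" if "k \<le> 4" for k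
    using assms that continuous_on_slice[of "{p..q}" "{0<..}" "\<lambda>x t. (pdx p q ^^ k) w x t" t]
    unfolding C41_on_def by auto
  show "continuous_on {p..q} (\<lambda>x. w x t)" using C[of 0] by simp
  show "continuous_on {p..q} (\<lambda>x. pdx p q w x t)" using C[of 1] by simp
  show "continuous_on {p..q} (\<lambda>x. (pdx p q ^^ 3) w x t)" using C[of 3] by simp
  show "continuous_on {p..q} (\<lambda>x. pdt w x t)"
    using continuous_on_slice[OF C41_on_time_regularity(3)[OF assms(1)]] assms(2) by simp
  show "\<forall>x\<in>{p..q}. ((\<lambda>y. w y t) has_real_derivative pdx p q w x t) (at x within {p..q})"
    using D[of 0] by simp
  show "\<forall>x\<in>{p..q}. ((\<lambda>y. pdx p q w y t) has_real_derivative (pdx p q ^^ 2) w x t) (at x within {p..q})"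
    using D[of 1] by (simp add: numeral_2_eq_2)
  show "\<forall>x\<in>{p..q}. ((\<lambda>y. (pdx p q ^^ 2) w y t) has_real_derivative (pdx p q ^^ 3) w x t)
      (at x within {p..q})"
    using D[of 2] by (simp add: numeral_3_eq_3)
qed

lemma integral_entropy:
  fixes f :: "real \<Rightarrow> real"
  assumes "continuous_on {p..q} f" "\<forall>x\<in>{p..q}. 0 < f x"
  shows "integral {p..q} (\<lambda>x. entropy n \<epsilon> (f x))
    = integral {p..q} (\<lambda>x. f x * ln (f x)) - integral {p..q} f
      + \<epsilon> / ((3 - n) * (4 - n)) * integral {p..q} (\<lambda>x. 1 / f x powr (3 - n))"
proof -
  have nz: "\<forall>x\<in>{p..q}. f x \<noteq> 0" using assms(2) by force
  have "(\<lambda>x. f x * ln (f x)) integrable_on {p..q}" "f integrable_on {p..q}"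
    "(\<lambda>x. 1 / f x powr (3 - n)) integrable_on {p..q}"
    using assms nz by (auto intro!: integrable_continuous_interval continuous_intros)
  then show ?thesis
    unfolding entropy_def
    by (simp add: integral_add integral_diff integrable_add integrable_diff integrable_on_mult_right
        del: times_divide_eq_right times_divide_eq_left)
qed

lemma has_real_derivative_integral_entropy:
  assumes "C41_on p q w" "\<forall>x\<in>{p..q}. \<forall>t>0. 0 < w x t" "0 < t" "n < 3"
  shows "((\<lambda>s. integral {p..q} (\<lambda>x. entropy n \<epsilon> (w x s))) has_real_derivative
           integral {p..q} (\<lambda>x. entropy_deriv n \<epsilon> (w x t) * pdt w x t)) (at t)"
proof (rule has_real_derivative_integral_comp[OF assms(3) C41_on_time_regularity(1)[OF assms(1)] assms(2)
      C41_on_time_regularity(2,3)[OF assms(1)]])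
  show "\<forall>y>0. (entropy n \<epsilon> has_real_derivative entropy_deriv n \<epsilon> y) (at y)"
    using entropy_has_real_derivative assms(4) by blast
  show "continuous_on {0<..} (entropy_deriv n \<epsilon>)"
    unfolding entropy_deriv_def[abs_def] by (intro continuous_intros) auto
qed

lemma has_real_derivative_energyF:
  assumes "C41_on p q u" "C41_on p q v"
    and "\<forall>x\<in>{p..q}. \<forall>t>0. 0 < u x t" "\<forall>x\<in>{p..q}. \<forall>t>0. 0 < v x t"
    and "0 < t" "n1 \<le> 2" "n2 \<le> 2"
  shows "((\<lambda>s. energyF p q chi1 chi2 n1 n2 \<epsilon> u v s) has_real_derivative
      integral {p..q} (\<lambda>x. entropy_deriv n1 \<epsilon> (u x t) * pdt u x t)
      + chi1 / chi2 * integral {p..q} (\<lambda>x. entropy_deriv n2 \<epsilon> (v x t) * pdt v x t)) (at t)"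
proof -
  have "((\<lambda>s. integral {p..q} (\<lambda>x. entropy n1 \<epsilon> (u x s))
              + chi1 / chi2 * integral {p..q} (\<lambda>x. entropy n2 \<epsilon> (v x s))) has_real_derivative
      integral {p..q} (\<lambda>x. entropy_deriv n1 \<epsilon> (u x t) * pdt u x t)
      + chi1 / chi2 * integral {p..q} (\<lambda>x. entropy_deriv n2 \<epsilon> (v x t) * pdt v x t)) (at t)"
    using assms by (intro DERIV_add DERIV_cmult has_real_derivative_integral_entropy) auto
  then show ?thesis
  proof (rule has_field_derivative_transform_within_open[where S = "{0<..}"])
    fix s :: real assume "s \<in> {0<..}"
    then have "continuous_on {p..q} (\<lambda>x. u x s)" "continuous_on {p..q} (\<lambda>x. v x s)"
      using assms(1,2) by (auto intro: C41_on_space_regularity)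
    then show "integral {p..q} (\<lambda>x. entropy n1 \<epsilon> (u x s))
        + chi1 / chi2 * integral {p..q} (\<lambda>x. entropy n2 \<epsilon> (v x s))
      = energyF p q chi1 chi2 n1 n2 \<epsilon> u v s"
      using assms(3,4) \<open>s \<in> {0<..}\<close>
      by (simp add: integral_entropy energyF_def algebra_simps)
  qed (use assms(5) in auto)
qed

lemma entropy_inequality_at:
  fixes w z :: "real \<Rightarrow> real \<Rightarrow> real" and R :: "real \<Rightarrow> real"
  assumes "p < q" "0 < \<epsilon>" "1 \<le> n" "n \<le> 2" "0 < t"
    and "C41_on p q w" "C41_on p q z" "\<forall>x\<in>{p..q}. 0 < w x t" "continuous_on {p..q} R"
    and "\<forall>x\<in>{p<..<q}. ((\<lambda>y. flux \<epsilon> \<alpha> n D chi (w y t) (pdx p q w y t) ((pdx p q ^^ 3) w y t) (pdx p q z y t))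
           has_real_derivative pdt w x t - R x) (at x)"
    and "\<forall>x\<in>{p, q}. pdx p q w x t = 0 \<and> (pdx p q ^^ 3) w x t = 0 \<and> pdx p q z x t = 0"
  shows "integral {p..q} (\<lambda>x. entropy_deriv n \<epsilon> (w x t) * pdt w x t)
         + \<epsilon> * integral {p..q} (\<lambda>x. w x t powr (n - 1) * ((pdx p q ^^ 2) w x t)\<^sup>2)
         + D * integral {p..q} (\<lambda>x. (pdx p q w x t)\<^sup>2 / w x t)
         + D * \<epsilon> * integral {p..q} (\<lambda>x. (pdx p q w x t)\<^sup>2 / w x t powr (5 - n))
       \<le> integral {p..q} (\<lambda>x. entropy_deriv n \<epsilon> (w x t) * R x)
         + chi * integral {p..q} (\<lambda>x. pdx p q w x t * pdx p q z x t)"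
  by (rule entropy_inequality[OF assms(1-4,8) C41_on_space_regularity(5-7,3)[OF assms(6,5)]
        C41_on_space_regularity(2)[OF assms(7,5)] C41_on_space_regularity(4)[OF assms(6,5)] assms(9,10)])
    (use assms(11) in auto)

text \<open>Weighting the v-inequality by \<chi>1/\<chi>2 cancels the cross terms \<chi>1 X; half of each Fisher
  information D_i I_i enters the dissipation, the other half absorbs the reaction terms.\<close>
lemma weighted_entropy_sum_le:
  fixes Fu Ju Iu Ku Ru Fv Jv Iv Kv Rv X :: real
  assumes "Fu + \<epsilon> * Ju + D1 * Iu + D1 * \<epsilon> * Ku \<le> Ru + chi1 * X"
    and "Fv + \<epsilon> * Jv + D2 * Iv + D2 * \<epsilon> * Kv \<le> Rv + (- chi2) * X"
    and "Ru - D1 / 2 * Iu \<le> Bu" "Rv - D2 / 2 * Iv \<le> Bv" "0 < chi1" "0 < chi2"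
  shows "Fu + chi1 / chi2 * Fv
     + (D1 / 2 * Iu + \<epsilon> * Ju + D1 * \<epsilon> * Ku + chi1 * D2 / (2 * chi2) * Iv
        + chi1 * \<epsilon> / chi2 * Jv + chi1 * D2 * \<epsilon> / chi2 * Kv)
     \<le> Bu + chi1 / chi2 * Bv"
proof -
  define k where "k = chi1 / chi2"
  have "0 < k" "k * chi2 = chi1" using assms by (simp_all add: k_def)
  have "k * (Fv + \<epsilon> * Jv + D2 * Iv + D2 * \<epsilon> * Kv - D2 / 2 * Iv) \<le> k * (Rv - D2 / 2 * Iv + (- chi2) * X)"
    using assms(2) \<open>0 < k\<close> by (intro mult_left_mono) auto
  moreover have "k * (Rv - D2 / 2 * Iv) \<le> k * Bv" using assms(4) \<open>0 < k\<close> by (intro mult_left_mono) auto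
  moreover have "k * (Fv + \<epsilon> * Jv + D2 * Iv + D2 * \<epsilon> * Kv - D2 / 2 * Iv)
      = k * Fv + k * (D2 / 2 * Iv) + k * (\<epsilon> * Jv) + k * (D2 * \<epsilon> * Kv)"
    by (simp add: algebra_simps)
  moreover have "k * (Rv - D2 / 2 * Iv + (- chi2) * X) = k * (Rv - D2 / 2 * Iv) - chi1 * X"
    using \<open>k * chi2 = chi1\<close> by (simp add: algebra_simps)
  moreover have "chi1 / chi2 * Fv = k * Fv" "chi1 * D2 / (2 * chi2) * Iv = k * (D2 / 2 * Iv)"
    "chi1 * \<epsilon> / chi2 * Jv = k * (\<epsilon> * Jv)" "chi1 * D2 * \<epsilon> / chi2 * Kv = k * (D2 * \<epsilon> * Kv)"
    "chi1 / chi2 * Bv = k * Bv"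
    by (simp_all add: k_def)
  ultimately show ?thesis using assms(1,3) by linarith
qed

lemma approx_sol_regularity:
  assumes "approx_sol p q \<alpha> D1 D2 chi1 chi2 lam1 lam2 a1 a2 n1 n2 \<epsilon> u0 v0 u v"
  shows "C41_on p q u" "C41_on p q v" "\<forall>x\<in>{p..q}. \<forall>t>0. 0 < u x t" "\<forall>x\<in>{p..q}. \<forall>t>0. 0 < v x t"
  using assms unfolding approx_sol_def by auto

text \<open>The v-equation is written as the u-equation with sensitivity -\<chi>2 and coefficient -a2.\<close>
lemma approx_sol_flux_equations:
  assumes "approx_sol p q \<alpha> D1 D2 chi1 chi2 lam1 lam2 a1 a2 n1 n2 \<epsilon> u0 v0 u v" "0 < t"
  shows "\<forall>x\<in>{p<..<q}. ((\<lambda>y. flux \<epsilon> \<alpha> n1 D1 chi1 (u y t) (pdx p q u y t) ((pdx p q ^^ 3) u y t) (pdx p q v y t))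
           has_real_derivative pdt u x t - logistic_factor \<epsilon> (u x t) * (lam1 - u x t + a1 * v x t)) (at x)"
    and "\<forall>x\<in>{p<..<q}. ((\<lambda>y. flux \<epsilon> \<alpha> n2 D2 (- chi2) (v y t) (pdx p q v y t) ((pdx p q ^^ 3) v y t) (pdx p q u y t))
           has_real_derivative pdt v x t - logistic_factor \<epsilon> (v x t) * (lam2 - v x t + (- a2) * u x t)) (at x)"
    and "\<forall>x\<in>{p, q}. pdx p q u x t = 0 \<and> (pdx p q ^^ 3) u x t = 0 \<and> pdx p q v x t = 0"
    and "\<forall>x\<in>{p, q}. pdx p q v x t = 0 \<and> (pdx p q ^^ 3) v x t = 0 \<and> pdx p q u x t = 0"
  using assms unfolding approx_sol_def flux_def logistic_factor_def by auto

lemma energy_dissipation_le: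
  fixes u v :: "real \<Rightarrow> real \<Rightarrow> real"
  assumes "p < q" "0 < D1" "0 < D2" "0 < lam1" "0 < lam2" "1 \<le> n1" "n1 \<le> 2" "1 \<le> n2" "n2 \<le> 2"
    and "0 < chi1" "0 < chi2" "0 < \<epsilon>" "\<epsilon> < 1"
    and sol: "approx_sol p q \<alpha> D1 D2 chi1 chi2 lam1 lam2 a1 a2 n1 n2 \<epsilon> u0 v0 u v" and "0 < t"
  defines "C \<equiv> reaction_constant (q - p) lam1 a1 D1 + reaction_constant (q - p) lam2 (- a2) D2"
  shows "\<exists>F'. ((\<lambda>s. energyF p q chi1 chi2 n1 n2 \<epsilon> u v s) has_real_derivative F') (at t) \<and>
     F' + dissD p q D1 D2 chi1 chi2 n1 n2 \<epsilon> u v t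
       \<le> C * (1 + chi1 / chi2) * (1 + (integral {p..q} (\<lambda>x. u x t)) ^ 7 + (integral {p..q} (\<lambda>x. v x t)) ^ 7)"
proof (intro exI conjI)
  define U V where "U = integral {p..q} (\<lambda>x. u x t)" and "V = integral {p..q} (\<lambda>x. v x t)"
  define Ku Kv where "Ku = reaction_constant (q - p) lam1 a1 D1" and "Kv = reaction_constant (q - p) lam2 (- a2) D2"
  note reg = approx_sol_regularity[OF sol] and eqs = approx_sol_flux_equations[OF sol \<open>0 < t\<close>]
  note u_reg = C41_on_space_regularity[OF reg(1) \<open>0 < t\<close>]
    and v_reg = C41_on_space_regularity[OF reg(2) \<open>0 < t\<close>]
  have pos: "\<forall>x\<in>{p..q}. 0 < u x t" "\<forall>x\<in>{p..q}. 0 < v x t" using reg(3,4) \<open>0 < t\<close> by auto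
  have nz: "\<forall>x\<in>{p..q}. 3 * (u x t)\<^sup>2 + \<epsilon> \<noteq> 0" "\<forall>x\<in>{p..q}. 3 * (v x t)\<^sup>2 + \<epsilon> \<noteq> 0"
    using pos \<open>0 < \<epsilon>\<close> by (metis add_pos_pos less_irrefl zero_less_power2 mult_pos_pos zero_less_numeral)+
  have "continuous_on {p..q} (\<lambda>x. logistic_factor \<epsilon> (u x t) * (lam1 - u x t + a1 * v x t))"
    "continuous_on {p..q} (\<lambda>x. logistic_factor \<epsilon> (v x t) * (lam2 - v x t + (- a2) * u x t))"
    unfolding logistic_factor_def using nz by (auto intro!: continuous_intros u_reg v_reg)
  note ent_u = entropy_inequality_at[OF assms(1,12,6,7,15) reg(1,2) pos(1) this(1) eqs(1,3)]
    and ent_v = entropy_inequality_at[OF assms(1,12,8,9,15) reg(2,1) pos(2) this(2) eqs(2,4)]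
  have "0 < U" "0 < V" unfolding U_def V_def using \<open>p < q\<close> pos u_reg(1) v_reg(1) by (auto intro: integral_pos)
  then have "Ku * (1 + U ^ 7 + V ^ 7) + chi1 / chi2 * (Kv * (1 + U ^ 7 + V ^ 7))
      \<le> C * (1 + chi1 / chi2) * (1 + U ^ 7 + V ^ 7)"
    using reaction_constant_pos[of "q - p" lam1 D1 a1] reaction_constant_pos[of "q - p" lam2 D2 "- a2"] assms
    unfolding C_def Ku_def Kv_def by (intro mult_add_le_add_mult_one_add) auto
  moreover have "integral {p..q} (\<lambda>x. entropy_deriv n1 \<epsilon> (u x t) * pdt u x t)
      + chi1 / chi2 * integral {p..q} (\<lambda>x. entropy_deriv n2 \<epsilon> (v x t) * pdt v x t)
      + dissD p q D1 D2 chi1 chi2 n1 n2 \<epsilon> u v t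
      \<le> Ku * (1 + U ^ 7 + V ^ 7) + chi1 / chi2 * (Kv * (1 + U ^ 7 + V ^ 7))"
    unfolding dissD_def
  proof (rule weighted_entropy_sum_le[OF ent_u ent_v[unfolded mult.commute[of "pdx p q v _ t"]]])
    show "integral {p..q} (\<lambda>x. entropy_deriv n1 \<epsilon> (u x t) * (logistic_factor \<epsilon> (u x t) * (lam1 - u x t + a1 * v x t)))
        - D1 / 2 * integral {p..q} (\<lambda>x. (pdx p q u x t)\<^sup>2 / u x t) \<le> Ku * (1 + U ^ 7 + V ^ 7)"
      using reaction_integral_le[OF assms(1,12,13,6,7,4,2) pos u_reg(5,2) v_reg(1), of a1] by (simp add: Ku_def U_def V_def)
    show "integral {p..q} (\<lambda>x. entropy_deriv n2 \<epsilon> (v x t) * (logistic_factor \<epsilon> (v x t) * (lam2 - v x t + (- a2) * u x t)))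
        - D2 / 2 * integral {p..q} (\<lambda>x. (pdx p q v x t)\<^sup>2 / v x t) \<le> Kv * (1 + U ^ 7 + V ^ 7)"
      using reaction_integral_le[OF assms(1,12,13,8,9,5,3) pos(2,1) v_reg(5,2) u_reg(1), of "- a2"]
      by (simp add: Kv_def U_def V_def add_ac)
  qed (use assms in auto)
  ultimately show "integral {p..q} (\<lambda>x. entropy_deriv n1 \<epsilon> (u x t) * pdt u x t)
      + chi1 / chi2 * integral {p..q} (\<lambda>x. entropy_deriv n2 \<epsilon> (v x t) * pdt v x t)
      + dissD p q D1 D2 chi1 chi2 n1 n2 \<epsilon> u v t
      \<le> C * (1 + chi1 / chi2) * (1 + (integral {p..q} (\<lambda>x. u x t)) ^ 7 + (integral {p..q} (\<lambda>x. v x t)) ^ 7)"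
    by (simp add: U_def V_def)
qed (rule has_real_derivative_energyF[OF approx_sol_regularity[OF sol] \<open>0 < t\<close> \<open>n1 \<le> 2\<close> \<open>n2 \<le> 2\<close>])

theorem lemma3p2:
  fixes p q \<alpha> D1 D2 a1 a2 lam1 lam2 n1 n2 :: real
  assumes "p < q" and "0 < \<alpha>" and "\<alpha> \<le> 1/2"
    and "D1 > 0" and "D2 > 0" and "a1 > 0" and "a2 > 0" and "lam1 > 0" and "lam2 > 0"
    and "1 \<le> n1" and "n1 \<le> 2" and "1 \<le> n2" and "n2 \<le> 2"
  shows "\<exists>C>0. \<forall>\<chi>1 \<chi>2 :: real. \<forall>u0 v0 :: real \<Rightarrow> real. \<forall>u0e v0e :: real \<Rightarrow> real \<Rightarrow> real.
     \<chi>1 > 0 \<longrightarrow> \<chi>2 > 0 \<longrightarrow> IE_comp p q u0 u0e \<longrightarrow> IE_comp p q v0 v0e \<longrightarrow>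
     (\<forall>\<epsilon>\<in>{0<..<1}. \<forall>u v :: real \<Rightarrow> real \<Rightarrow> real.
        approx_sol p q \<alpha> D1 D2 \<chi>1 \<chi>2 lam1 lam2 a1 a2 n1 n2 \<epsilon> (u0e \<epsilon>) (v0e \<epsilon>) u v \<longrightarrow>
        (\<forall>t>0. \<exists>F'. ((\<lambda>s. energyF p q \<chi>1 \<chi>2 n1 n2 \<epsilon> u v s) has_real_derivative F') (at t) \<and>
           F' + dissD p q D1 D2 \<chi>1 \<chi>2 n1 n2 \<epsilon> u v t
             \<le> C * (1 + \<chi>1 / \<chi>2) * (1 + (integral {p..q} (\<lambda>x. u x t)) ^ 7
                                        + (integral {p..q} (\<lambda>x. v x t)) ^ 7)))"
proof (rule exI[of _ "reaction_constant (q - p) lam1 a1 D1 + reaction_constant (q - p) lam2 (- a2) D2"],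
    intro conjI allI impI ballI)
  show "0 < reaction_constant (q - p) lam1 a1 D1 + reaction_constant (q - p) lam2 (- a2) D2"
    using assms by (intro add_pos_pos reaction_constant_pos) auto
  fix \<chi>1 \<chi>2 \<epsilon> t :: real and u0 v0 :: "real \<Rightarrow> real" and u v u0e v0e :: "real \<Rightarrow> real \<Rightarrow> real"
  assume "0 < \<chi>1" "0 < \<chi>2" "IE_comp p q u0 u0e" "IE_comp p q v0 v0e" "\<epsilon> \<in> {0<..<1}"
    and "approx_sol p q \<alpha> D1 D2 \<chi>1 \<chi>2 lam1 lam2 a1 a2 n1 n2 \<epsilon> (u0e \<epsilon>) (v0e \<epsilon>) u v" "0 < t"
  then show "\<exists>F'. ((\<lambda>s. energyF p q \<chi>1 \<chi>2 n1 n2 \<epsilon> u v s) has_real_derivative F') (at t) \<and>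
      F' + dissD p q D1 D2 \<chi>1 \<chi>2 n1 n2 \<epsilon> u v t
        \<le> (reaction_constant (q - p) lam1 a1 D1 + reaction_constant (q - p) lam2 (- a2) D2)
          * (1 + \<chi>1 / \<chi>2) * (1 + (integral {p..q} (\<lambda>x. u x t)) ^ 7 + (integral {p..q} (\<lambda>x. v x t)) ^ 7)"
    using assms by (intro energy_dissipation_le) auto
qed

end
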